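(* Let $X,Y\subseteq\mathbb{Q}$ be such that $X\setminus Y$ and $Y\setminus X$ are finite. Then $X$ is a base if and only if $Y$ is a base.
   Context: For $X\subseteq\mathbb{Q}$ and a positive integer $N$, write $X_N:=\{x_1+\cdots+x_N : x_1,\dots,x_N\in X\}$. $X$ is called a base if $X_N=\mathbb{Q}$ for some $N\ge 1$. *)

theory Defs
  imports Complex_Main
begin

definition sumset :: "nat \<Rightarrow> rat set \<Rightarrow> rat set" where
  "sumset N X = {(\<Sum>i<N. x i) | x. \<forall>i<N. x i \<in> X}"

definition is_base :: "rat set \<Rightarrow> bool" where
  "is_base X \<longleftrightarrow> (\<exists>N\<ge>1. sumset N X = UNIV)"

end

theory Submission
  imports Defs
begin

text \<open>
  Supersets of bases are bases, so it suffices that removing a single element a from a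
  base Y \<union> {a} leaves a base. The base Y \<union> {a} is
  unbounded in both directions, so Y contains a positive and a negative element, and the
  finite sums of elements of Y then form a subgroup R of \<rat>. Every rational differs from
  some j a with j \<le> N by an element of R; by pigeonhole some multiple k z with
  1 \<le> k \<le> N + 1 of every rational z lies in R, so R is divisible and R = \<rat>. In
  particular a itself is a sum of m elements of Y, hence every rational is a sum of at most
  N + N m elements of Y. Finally 0 is a sum of B and of B + 1 elements of Y for some B,
  which pads all these representations to one common length.
\<close>

lemma sumset_0 [simp]: "sumset 0 Z = {0}"
  by (simp add: sumset_def)

lemma sumset_Suc: "sumset (Suc n) Z = {x + s | x s. x \<in> Z \<and> s \<in> sumset n Z}"
proof (intro set_eqI iffI)
  fix q assume "q \<in> sumset (Suc n) Z"
  then obtain x where x: "\<forall>i<Suc n. x i \<in> Z" "q = (\<Sum>i<Suc n. x i)"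
    unfolding sumset_def by blast
  then have "(\<Sum>i<n. x i) \<in> sumset n Z"
    unfolding sumset_def by auto
  moreover have "q = x n + (\<Sum>i<n. x i)"
    using x(2) by simp
  ultimately show "q \<in> {x + s | x s. x \<in> Z \<and> s \<in> sumset n Z}"
    using x(1) by blast
next
  fix q assume "q \<in> {x + s | x s. x \<in> Z \<and> s \<in> sumset n Z}"
  then obtain y s where y: "y \<in> Z" "q = y + s" and "s \<in> sumset n Z"
    by blast
  then obtain f where f: "\<forall>i<n. f i \<in> Z" "s = (\<Sum>i<n. f i)"
    unfolding sumset_def by blast
  have "(\<Sum>i<n. (f(n := y)) i) = s"
    using f(2) by (auto intro: sum.cong)
  then have "q = (\<Sum>i<Suc n. (f(n := y)) i)"
    using y(2) by simp
  moreover have "\<forall>i<Suc n. (f(n := y)) i \<in> Z"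
    using f(1) y(1) by (auto simp: less_Suc_eq)
  ultimately show "q \<in> sumset (Suc n) Z"
    unfolding sumset_def by blast
qed

lemma sumset_SucE:
  assumes "q \<in> sumset (Suc n) Z"
  obtains x s where "x \<in> Z" "s \<in> sumset n Z" "q = x + s"
  using assms by (auto simp: sumset_Suc)

lemma sumset_SucI: "x \<in> Z \<Longrightarrow> s \<in> sumset n Z \<Longrightarrow> x + s \<in> sumset (Suc n) Z"
  by (auto simp: sumset_Suc)

lemma sumset_one: "x \<in> Z \<Longrightarrow> x \<in> sumset 1 Z"
  using sumset_SucI[of x Z 0 0] by simp

lemma sumset_add: "r \<in> sumset m Z \<Longrightarrow> s \<in> sumset n Z \<Longrightarrow> r + s \<in> sumset (m + n) Z"
proof (induction m arbitrary: r)
  case (Suc m)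
  then obtain x t where "x \<in> Z" "t \<in> sumset m Z" "r = x + t"
    by (auto elim: sumset_SucE)
  with Suc.IH[of t] Suc.prems(2) show ?case
    by (auto simp: add.assoc intro: sumset_SucI)
qed simp

lemma sumset_of_nat_mult: "r \<in> sumset t Z \<Longrightarrow> of_nat c * r \<in> sumset (c * t) Z"
proof (induction c)
  case (Suc c)
  then have "r + of_nat c * r \<in> sumset (t + c * t) Z"
    by (intro sumset_add)
  then show ?case
    by (simp add: algebra_simps)
qed simp

lemma sumset_mono: "Z \<subseteq> W \<Longrightarrow> sumset n Z \<subseteq> sumset n W"
  by (induction n) (auto simp: sumset_Suc)

lemma sumset_lower_bound:
  "(\<And>x. x \<in> Z \<Longrightarrow> l \<le> x) \<Longrightarrow> s \<in> sumset n Z \<Longrightarrow> of_nat n * l \<le> s"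
proof (induction n arbitrary: s)
  case (Suc n)
  then show ?case
    by (elim sumset_SucE) (fastforce simp: algebra_simps)
qed simp

lemma sumset_upper_bound:
  "(\<And>x. x \<in> Z \<Longrightarrow> x \<le> l) \<Longrightarrow> s \<in> sumset n Z \<Longrightarrow> s \<le> of_nat n * l"
proof (induction n arbitrary: s)
  case (Suc n)
  then show ?case
    by (elim sumset_SucE) (fastforce simp: algebra_simps)
qed simp

lemma sumset_insert:
  "q \<in> sumset n (insert a Z) \<Longrightarrow> \<exists>j\<le>n. q - of_nat j * a \<in> sumset (n - j) Z"
proof (induction n arbitrary: q)
  case (Suc n)
  obtain x s where xs: "x \<in> insert a Z" "s \<in> sumset n (insert a Z)" "q = x + s"
    using Suc.prems by (rule sumset_SucE)
  then obtain j where j: "j \<le> n" "s - of_nat j * a \<in> sumset (n - j) Z"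
    using Suc.IH by blast
  show ?case
  proof (cases "x = a")
    case True
    then have "q - of_nat (Suc j) * a = s - of_nat j * a"
      using xs(3) by (simp add: algebra_simps)
    with j show ?thesis
      by (intro exI[of _ "Suc j"]) auto
  next
    case False
    with xs j(2) have "x + (s - of_nat j * a) \<in> sumset (Suc (n - j)) Z"
      by (auto intro: sumset_SucI)
    moreover have "Suc (n - j) = Suc n - j"
      using j(1) by simp
    ultimately show ?thesis
      using j(1) xs(3) by (intro exI[of _ j]) (auto simp: algebra_simps)
  qed
qed simp

text \<open>The Frobenius coin problem for the coprime lengths B and B + 1.\<close>

lemma zero_in_sumset_pad:
  assumes "0 \<in> sumset B Z" "0 \<in> sumset (Suc B) Z" "B * B \<le> n"
  shows "0 \<in> sumset n Z"
proof (cases "B = 0")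
  case True
  then show ?thesis
    using sumset_of_nat_mult[OF assms(2), of n] by simp
next
  case False
  define d r where "d = n div B" and "r = n mod B"
  have "r < B" "B \<le> d"
    using False assms(3) div_le_mono[OF assms(3), of B] by (auto simp: d_def r_def)
  then have n: "n = (d - r) * B + r * Suc B"
    unfolding d_def r_def by (simp add: algebra_simps)
  have "of_nat (d - r) * 0 + of_nat r * 0 \<in> sumset ((d - r) * B + r * Suc B) Z"
    using assms(1,2) by (intro sumset_add sumset_of_nat_mult)
  then show ?thesis
    using n by simp
qed

lemma base_unbounded_above:
  assumes "is_base X"
  shows "\<exists>x\<in>X. l < x"
proof (rule ccontr)
  assume "\<not> ?thesis"
  then have "\<And>x. x \<in> X \<Longrightarrow> x \<le> max l 0"
    by force
  moreover obtain N where "sumset N X = UNIV"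
    using assms by (auto simp: is_base_def)
  ultimately have "of_nat N * max l 0 + 1 \<le> of_nat N * max l 0"
    using sumset_upper_bound by blast
  then show False
    by simp
qed

lemma base_unbounded_below:
  assumes "is_base X"
  shows "\<exists>x\<in>X. x < l"
proof (rule ccontr)
  assume "\<not> ?thesis"
  then have "\<And>x. x \<in> X \<Longrightarrow> min l 0 \<le> x"
    by force
  moreover obtain N where "sumset N X = UNIV"
    using assms by (auto simp: is_base_def)
  ultimately have "of_nat N * min l 0 \<le> of_nat N * min l 0 - 1"
    using sumset_lower_bound by blast
  then show False
    by simp
qed

lemma nat_combination_eq_zero:
  fixes y e :: rat
  assumes "y * e < 0"
  shows "\<exists>u v::nat. 0 < v \<and> of_nat v * y + of_nat u * e = 0"
proof -
  obtain p q where pq: "quotient_of (y / - e) = (p, q)"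
    by (cases "quotient_of (y / - e)") auto
  have q: "q > 0" and yq: "y / - e = of_int p / of_int q"
    using pq quotient_of_denom_pos quotient_of_div by blast+
  have "y / - e > 0"
    using assms by (auto simp: mult_less_0_iff divide_pos_neg divide_neg_pos)
  then have "(0::rat) < of_int p / of_int q"
    using yq by metis
  then have "p > 0"
    using q by (simp add: zero_less_divide_iff)
  have "e \<noteq> 0"
    using assms by auto
  then have "of_int q * y + of_int p * e = 0"
    using yq q by (simp add: field_simps)
  then show ?thesis
    using q \<open>p > 0\<close> by (intro exI[of _ "nat p"] exI[of _ "nat q"]) simp
qed

definition finite_sums :: "rat set \<Rightarrow> rat set" where
  "finite_sums Z = (\<Union>n. sumset n Z)"

lemma finite_sums_iff: "r \<in> finite_sums Z \<longleftrightarrow> (\<exists>n. r \<in> sumset n Z)"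
  by (simp add: finite_sums_def)

lemma zero_in_finite_sums: "0 \<in> finite_sums Z"
  unfolding finite_sums_iff using sumset_0 by blast

lemma finite_sums_add: "r \<in> finite_sums Z \<Longrightarrow> s \<in> finite_sums Z \<Longrightarrow> r + s \<in> finite_sums Z"
  unfolding finite_sums_iff using sumset_add by blast

lemma finite_sums_of_nat_mult: "r \<in> finite_sums Z \<Longrightarrow> of_nat k * r \<in> finite_sums Z"
  unfolding finite_sums_iff using sumset_of_nat_mult by blast

lemma subset_finite_sums: "y \<in> Z \<Longrightarrow> y \<in> finite_sums Z"
  unfolding finite_sums_iff using sumset_one by blast

lemma finite_sums_uminus:
  assumes b: "b \<in> Z" "0 < b" and c: "c \<in> Z" "c < 0" and r: "r \<in> finite_sums Z"
  shows "- r \<in> finite_sums Z"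
proof -
  have neg_elem: "- y \<in> finite_sums Z" if y: "y \<in> Z" for y
  proof (cases "y = 0")
    case False
    obtain e where e: "e \<in> Z" "y * e < 0"
      using b c False by (metis linorder_neqE_linordered_idom mult_pos_neg mult_neg_pos)
    then obtain u v :: nat where uv: "0 < v" "of_nat v * y + of_nat u * e = 0"
      using nat_combination_eq_zero by blast
    then have "- y = of_nat (v - 1) * y + of_nat u * e"
      by (cases v) (simp_all add: algebra_simps)
    then show ?thesis
      using y e(1) by (simp add: finite_sums_add finite_sums_of_nat_mult subset_finite_sums)
  qed (simp add: zero_in_finite_sums)
  obtain n where "r \<in> sumset n Z"
    using r finite_sums_iff by blast
  then show ?thesis
  proof (induction n arbitrary: r)
    case (Suc n)
    obtain x s where "x \<in> Z" "s \<in> sumset n Z" "r = x + s"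
      using Suc.prems by (rule sumset_SucE)
    then have "- x + - s \<in> finite_sums Z"
      using Suc.IH neg_elem by (intro finite_sums_add)
    then show ?case
      using \<open>r = x + s\<close> by simp
  qed (simp add: zero_in_finite_sums)
qed

lemma multiple_in_subgroup_by_pigeonhole:
  fixes R :: "'a :: ring_1 set"
  assumes add: "\<And>r s. r \<in> R \<Longrightarrow> s \<in> R \<Longrightarrow> r + s \<in> R"
    and uminus: "\<And>r. r \<in> R \<Longrightarrow> - r \<in> R"
    and cover: "\<And>q. \<exists>j\<le>N. q - of_nat j * a \<in> R"
  shows "\<exists>k\<in>{1..N+1}. of_nat k * z \<in> R"
proof -
  have "\<forall>i. \<exists>j. j \<le> N \<and> of_nat i * z - of_nat j * a \<in> R"
    using cover by blast
  then obtain f where f: "\<And>i. f i \<le> N \<and> of_nat i * z - of_nat (f i) * a \<in> R"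
    by metis
  have "card (f ` {0..N+1}) < card {0..N+1}"
    using f card_mono[of "{0..N}" "f ` {0..N+1}"] by force
  then obtain i1 i2 where i: "i1 \<le> N + 1" "i2 < i1" "f i1 = f i2"
    using pigeonhole[of f "{0..N+1}"] unfolding inj_on_def
    by (metis atLeastAtMost_iff linorder_neqE_nat)
  have "(of_nat i1 * z - of_nat (f i1) * a) + - (of_nat i2 * z - of_nat (f i2) * a) \<in> R"
    using f by (blast intro: add uminus)
  moreover have "(of_nat i1 * z - of_nat (f i1) * a) + - (of_nat i2 * z - of_nat (f i2) * a)
      = of_nat (i1 - i2) * z"
    using i by (simp add: of_nat_diff algebra_simps)
  ultimately show ?thesis
    using i by (intro bexI[of _ "i1 - i2"]) auto
qed

lemma rat_subset_eq_UNIV_if_multiples: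
  fixes R :: "rat set"
  assumes mult: "\<And>r k. r \<in> R \<Longrightarrow> of_nat k * r \<in> R"
    and multiple: "\<And>z. \<exists>k\<in>{1..K}. of_nat k * z \<in> R"
  shows "R = UNIV"
proof (rule sym, rule UNIV_eq_I)
  fix w :: rat
  obtain k where k: "k \<in> {1..K}" "of_nat k * (w / fact K) \<in> R"
    using multiple by blast
  then obtain d :: nat where "fact K = k * d"
    using dvd_fact[of k K] by (auto elim: dvdE)
  then have d: "(fact K :: rat) = of_nat k * of_nat d"
    by (metis of_nat_fact of_nat_mult)
  have "of_nat k * of_nat d \<noteq> (0 :: rat)"
    using d fact_nonzero by metis
  then have "of_nat d * (of_nat k * (w / fact K)) = w"
    by (simp add: d)
  then show "w \<in> R"
    using mult[OF k(2), of d] by simp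
qed

lemma zero_in_consecutive_sumsets:
  assumes "finite_sums Z = UNIV" "b \<in> Z"
  shows "\<exists>B. 0 \<in> sumset B Z \<and> 0 \<in> sumset (Suc B) Z"
proof -
  obtain p where p: "- b \<in> sumset p Z"
    using assms(1) finite_sums_iff by blast
  obtain t where t: "b / of_nat (Suc p) \<in> sumset t Z"
    using assms(1) finite_sums_iff by blast
  have "of_nat (Suc p) * (b / of_nat (Suc p)) + - b \<in> sumset (Suc p * t + p) Z"
    using sumset_of_nat_mult[OF t] p by (rule sumset_add)
  then have "0 \<in> sumset (Suc p * t + p) Z"
    by simp
  moreover have "b + - b \<in> sumset (1 + p) Z"
    using sumset_one[OF assms(2)] p by (rule sumset_add)
  then have "of_nat (Suc t) * 0 \<in> sumset (Suc t * Suc p) Z"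
    by (intro sumset_of_nat_mult) simp
  then have "0 \<in> sumset (Suc (Suc p * t + p)) Z"
    by (simp add: algebra_simps)
  ultimately show ?thesis
    by blast
qed

lemma is_base_if_bounded_length:
  assumes "finite_sums Z = UNIV" "Z \<noteq> {}"
    and bounded: "\<And>q. \<exists>l\<le>L. q \<in> sumset l Z"
  shows "is_base Z"
proof -
  obtain B where B: "0 \<in> sumset B Z" "0 \<in> sumset (Suc B) Z"
    using zero_in_consecutive_sumsets assms(1,2) by blast
  define M where "M = Suc L + B * B"
  have "q \<in> sumset M Z" for q
  proof -
    obtain l where l: "l \<le> L" "q \<in> sumset l Z"
      using bounded by blast
    have "0 \<in> sumset (M - l) Z"
      using zero_in_sumset_pad[OF B] l(1) by (simp add: M_def)
    then have "q + 0 \<in> sumset (l + (M - l)) Z"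
      using l(2) by (intro sumset_add)
    then show ?thesis
      using l(1) by (simp add: M_def)
  qed
  then show ?thesis
    unfolding is_base_def by (intro exI[of _ M]) (auto simp: M_def)
qed

lemma is_base_insert_imp_is_base:
  assumes "is_base (insert a Y)"
  shows "is_base Y"
proof -
  obtain N where N: "sumset N (insert a Y) = UNIV"
    using assms by (auto simp: is_base_def)
  obtain b c where b: "b \<in> Y" "0 < b" and c: "c \<in> Y" "c < 0"
    using base_unbounded_above[OF assms, of "max a 0"]
      base_unbounded_below[OF assms, of "min a 0"] by force
  have cover: "\<exists>j\<le>N. q - of_nat j * a \<in> sumset (N - j) Y" for q
    using sumset_insert[of q N a Y] N by blast
  have "\<exists>k\<in>{1..N+1}. of_nat k * z \<in> finite_sums Y" for z
    using finite_sums_add finite_sums_uminus[OF b c] cover finite_sums_iff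
    by (intro multiple_in_subgroup_by_pigeonhole) blast+
  then have all: "finite_sums Y = UNIV"
    using finite_sums_of_nat_mult by (intro rat_subset_eq_UNIV_if_multiples) blast+
  then obtain m where m: "a \<in> sumset m Y"
    using finite_sums_iff by blast
  have "\<exists>l\<le>N + N * m. q \<in> sumset l Y" for q
  proof -
    obtain j where j: "j \<le> N" "q - of_nat j * a \<in> sumset (N - j) Y"
      using cover by blast
    then have "(q - of_nat j * a) + of_nat j * a \<in> sumset (N - j + j * m) Y"
      using sumset_of_nat_mult[OF m] by (intro sumset_add)
    moreover have "N - j + j * m \<le> N + N * m"
      using j(1) by (intro add_le_mono) auto
    ultimately show ?thesis
      by auto
  qed
  then show ?thesis
    using all b(1) by (intro is_base_if_bounded_length) auto
qed

lemma is_base_mono: "is_base Z \<Longrightarrow> Z \<subseteq> W \<Longrightarrow> is_base W"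
  unfolding is_base_def using sumset_mono by blast

lemma is_base_Un_finite_imp_is_base: "finite F \<Longrightarrow> is_base (Y \<union> F) \<Longrightarrow> is_base Y"
proof (induction F rule: finite_induct)
  case (insert x F)
  then show ?case
    using is_base_insert_imp_is_base[of x "Y \<union> F"] by simp
qed simp

lemma is_base_imp_is_base_if_finite_diff: "finite (X - Y) \<Longrightarrow> is_base X \<Longrightarrow> is_base Y"
  using is_base_Un_finite_imp_is_base[of "X - Y" "X \<inter> Y"] is_base_mono[of "X \<inter> Y" Y]
  by (simp add: Int_Diff_Un)

theorem proposition2p6:
  fixes X Y :: "rat set"
  assumes "finite (X - Y)" and "finite (Y - X)"
  shows "is_base X \<longleftrightarrow> is_base Y"
  using is_base_imp_is_base_if_finite_diff assms by blast

end
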